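(* Let $\mathcal G$ be a finite connected groupoid and $\alpha=(S_g,\alpha_g)_{g\in\mathcal G}$ a unital group-type partial action of $\mathcal G$ on a commutative ring $S=\bigoplus_{y\in\mathcal G_0}S_y$, with $S_g=S1_g$ and $1_g\ne0$ for all $g$. If $S^{\alpha_{\mathcal G}}\subseteq S$ is an $\alpha$-partial Galois extension, then for every $y\in\mathcal G_0$, $S_y^{\alpha_{\mathcal G(y)}}\subseteq S_y$ is an $\alpha_{\mathcal G(y)}$-partial Galois extension, where $\alpha_{\mathcal G(y)}=(S_g,\alpha_g)_{g\in\mathcal G(y)}$ is the partial action of the isotropy group $\mathcal G(y)$ on $S_y$.
   Context: A groupoid is a small category with all morphisms invertible; $\mathcal G_0$ is its object set (identified with identity morphisms), $s(g),t(g)$ source and target, $\mathcal G(x,y)=\{g:s(g)=x,t(g)=y\}$, $\mathcal G(y)=\mathcal G(y,y)$; connected means all $\mathcal G(x,y)\neq\emptyset$. A partial action $\alpha=(S_g,\alpha_g)_{g\in\mathcal G}$ on a ring $S$: for each $g$, $S_{t(g)}$ is an ideal of $S$, $S_g$ an ideal of $S_{t(g)}$, $\alpha_g:S_{g^{-1}}\to S_g$ a ring isomorphism; $\alpha_x=\mathrm{id}_{S_x}$; for composable $(g,h)$ (i.e. $s(g)=t(h)$), $\alpha_h^{-1}(S_{g^{-1}}\cap S_h)\subseteq S_{(gh)^{-1}}$ and $\alpha_g\alpha_h(a)=\alpha_{gh}(a)$ there. Unital: $S_g=S1_g$, $1_g$ central idempotent. Group-type: there exist $x\in\mathcal G_0$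 and $\tau_y\in\mathcal G(x,y)$ ($y\in\mathcal G_0$, $\tau_x=x$) with $S_{\tau_y^{-1}}=S_x$, $S_{\tau_y}=S_y$ for all $y$. For a partial action $\beta=(A_g,\beta_g)_{g\in\mathcal K}$ of a groupoid (or group) $\mathcal K$ on a ring $A$, $A^{\beta}=\{a\in A:\beta_g(a1_{g^{-1}})=a1_g\ \forall g\in\mathcal K\}$, and $A^\beta\subseteq A$ is a $\beta$-partial Galois extension if there exist $m\ge1$, $a_i,b_i\in A$ with $\sum_{i=1}^m a_i\beta_g(b_i1_{g^{-1}})=\delta_{z,g}1_z$ for all $z\in\mathcal K_0$, $g\in\mathcal K$, i.e. the sum equals $1_g$ if $g$ is an identity and $0$ otherwise. *)

theory Defs
  imports Main
begin

text \<open>A groupoid given by its set of morphisms, its set of objects (identified with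
identity morphisms), source, target, (partial) composition and inverse.
Composition  mult g h  is meaningful when  src g = tgt h  (first h, then g).\<close>

record 'g groupoid =
  carr :: "'g set"
  obj  :: "'g set"
  src  :: "'g \<Rightarrow> 'g"
  tgt  :: "'g \<Rightarrow> 'g"
  mult :: "'g \<Rightarrow> 'g \<Rightarrow> 'g"
  ginv :: "'g \<Rightarrow> 'g"

definition groupoid :: "('g, 'b) groupoid_scheme \<Rightarrow> bool" where
  "groupoid \<Gamma> \<longleftrightarrow>
     obj \<Gamma> \<subseteq> carr \<Gamma> \<and>
     (\<forall>g\<in>carr \<Gamma>. src \<Gamma> g \<in> obj \<Gamma> \<and> tgt \<Gamma> g \<in> obj \<Gamma>) \<and>
     (\<forall>x\<in>obj \<Gamma>. src \<Gamma> x = x \<and> tgt \<Gamma> x = x) \<and>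
     (\<forall>g\<in>carr \<Gamma>. \<forall>h\<in>carr \<Gamma>. src \<Gamma> g = tgt \<Gamma> h \<longrightarrow>
        mult \<Gamma> g h \<in> carr \<Gamma> \<and> src \<Gamma> (mult \<Gamma> g h) = src \<Gamma> h \<and>
        tgt \<Gamma> (mult \<Gamma> g h) = tgt \<Gamma> g) \<and>
     (\<forall>f\<in>carr \<Gamma>. \<forall>g\<in>carr \<Gamma>. \<forall>h\<in>carr \<Gamma>.
        src \<Gamma> f = tgt \<Gamma> g \<longrightarrow> src \<Gamma> g = tgt \<Gamma> h \<longrightarrow>
        mult \<Gamma> (mult \<Gamma> f g) h = mult \<Gamma> f (mult \<Gamma> g h)) \<and>
     (\<forall>g\<in>carr \<Gamma>. mult \<Gamma> g (src \<Gamma> g) = g \<and> mult \<Gamma> (tgt \<Gamma> g) g = g) \<and>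
     (\<forall>g\<in>carr \<Gamma>. ginv \<Gamma> g \<in> carr \<Gamma> \<and>
        src \<Gamma> (ginv \<Gamma> g) = tgt \<Gamma> g \<and> tgt \<Gamma> (ginv \<Gamma> g) = src \<Gamma> g \<and>
        mult \<Gamma> g (ginv \<Gamma> g) = tgt \<Gamma> g \<and> mult \<Gamma> (ginv \<Gamma> g) g = src \<Gamma> g)"

definition hom :: "('g, 'b) groupoid_scheme \<Rightarrow> 'g \<Rightarrow> 'g \<Rightarrow> 'g set" where
  "hom \<Gamma> x y = {g\<in>carr \<Gamma>. src \<Gamma> g = x \<and> tgt \<Gamma> g = y}"

definition isotropy :: "('g, 'b) groupoid_scheme \<Rightarrow> 'g \<Rightarrow> 'g set" where
  "isotropy \<Gamma> y = hom \<Gamma> y y"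

definition connected_groupoid :: "('g, 'b) groupoid_scheme \<Rightarrow> bool" where
  "connected_groupoid \<Gamma> \<longleftrightarrow> (\<forall>x\<in>obj \<Gamma>. \<forall>y\<in>obj \<Gamma>. hom \<Gamma> x y \<noteq> {})"

definition ideal_in :: "'a::comm_ring_1 set \<Rightarrow> 'a set \<Rightarrow> bool" where
  "ideal_in I J \<longleftrightarrow> I \<subseteq> J \<and> 0 \<in> I \<and>
     (\<forall>a\<in>I. \<forall>b\<in>I. a + b \<in> I) \<and> (\<forall>a\<in>I. - a \<in> I) \<and>
     (\<forall>r\<in>J. \<forall>a\<in>I. r * a \<in> I)"

text \<open>Partial action (S_g, alpha_g) of the groupoid on the ring S = UNIV :: 'a.\<close>
definition partial_action ::
  "('g, 'b) groupoid_scheme \<Rightarrow> ('g \<Rightarrow> 'a::comm_ring_1 set) \<Rightarrow> ('g \<Rightarrow> 'a \<Rightarrow> 'a) \<Rightarrow> bool" where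
  "partial_action \<Gamma> D \<alpha> \<longleftrightarrow>
     (\<forall>g\<in>carr \<Gamma>. ideal_in (D (tgt \<Gamma> g)) UNIV \<and> ideal_in (D g) (D (tgt \<Gamma> g))) \<and>
     (\<forall>g\<in>carr \<Gamma>. bij_betw (\<alpha> g) (D (ginv \<Gamma> g)) (D g) \<and>
        (\<forall>a\<in>D (ginv \<Gamma> g). \<forall>b\<in>D (ginv \<Gamma> g).
           \<alpha> g (a + b) = \<alpha> g a + \<alpha> g b \<and> \<alpha> g (a * b) = \<alpha> g a * \<alpha> g b)) \<and>
     (\<forall>x\<in>obj \<Gamma>. \<forall>a\<in>D x. \<alpha> x a = a) \<and>
     (\<forall>g\<in>carr \<Gamma>. \<forall>h\<in>carr \<Gamma>. src \<Gamma> g = tgt \<Gamma> h \<longrightarrow>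
        (\<forall>a\<in>D (ginv \<Gamma> h). \<alpha> h a \<in> D (ginv \<Gamma> g) \<inter> D h \<longrightarrow>
           a \<in> D (ginv \<Gamma> (mult \<Gamma> g h)) \<and> \<alpha> g (\<alpha> h a) = \<alpha> (mult \<Gamma> g h) a))"

definition unital_pa ::
  "('g, 'b) groupoid_scheme \<Rightarrow> ('g \<Rightarrow> 'a::comm_ring_1 set) \<Rightarrow> ('g \<Rightarrow> 'a) \<Rightarrow> bool" where
  "unital_pa \<Gamma> D e \<longleftrightarrow>
     (\<forall>g\<in>carr \<Gamma>. D g = {a * e g | a. True} \<and> e g * e g = e g)"

definition group_type ::
  "('g, 'b) groupoid_scheme \<Rightarrow> ('g \<Rightarrow> 'a set) \<Rightarrow> bool" where
  "group_type \<Gamma> D \<longleftrightarrow>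
     (\<exists>x\<in>obj \<Gamma>. \<exists>\<tau>. \<tau> x = x \<and>
        (\<forall>y\<in>obj \<Gamma>. \<tau> y \<in> hom \<Gamma> x y \<and>
           D (ginv \<Gamma> (\<tau> y)) = D x \<and> D (\<tau> y) = D y))"

text \<open>S = (direct sum over y in G_0 of S_y), S_y = S 1_y: the 1_y are pairwise
orthogonal idempotents summing to 1.\<close>
definition direct_sum_decomp ::
  "('g, 'b) groupoid_scheme \<Rightarrow> ('g \<Rightarrow> 'a::comm_ring_1) \<Rightarrow> bool" where
  "direct_sum_decomp \<Gamma> e \<longleftrightarrow>
     (\<Sum>y\<in>obj \<Gamma>. e y) = 1 \<and>
     (\<forall>x\<in>obj \<Gamma>. \<forall>y\<in>obj \<Gamma>. x \<noteq> y \<longrightarrow> e x * e y = 0)"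

text \<open>Fixed subring A^beta of a (unital) partial action of K on A (not needed in the
statement of the Galois condition itself, recorded for reference).\<close>
definition fixed_ring ::
  "'g set \<Rightarrow> ('g \<Rightarrow> 'g) \<Rightarrow> 'a::comm_ring_1 set \<Rightarrow> ('g \<Rightarrow> 'a \<Rightarrow> 'a) \<Rightarrow> ('g \<Rightarrow> 'a) \<Rightarrow> 'a set" where
  "fixed_ring K iv A \<beta> e = {a\<in>A. \<forall>g\<in>K. \<beta> g (a * e (iv g)) = a * e g}"

text \<open>A^beta \<subseteq> A is a beta-partial Galois extension, where beta is a unital partial
action of K (with identities K0 and inverse map inv) on the ring A, given by
the maps beta_g and identities 1_g = e g.\<close>
definition partial_galois ::
  "'g set \<Rightarrow> 'g set \<Rightarrow> ('g \<Rightarrow> 'g) \<Rightarrow> 'a::comm_ring_1 set \<Rightarrow> ('g \<Rightarrow> 'a \<Rightarrow> 'a) \<Rightarrow> ('g \<Rightarrow> 'a) \<Rightarrow> bool" where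
  "partial_galois K K0 iv A \<beta> e \<longleftrightarrow>
     (\<exists>m::nat. m \<ge> 1 \<and> (\<exists>a b. (\<forall>i<m. a i \<in> A \<and> b i \<in> A) \<and>
        (\<forall>g\<in>K. (\<Sum>i<m. a i * \<beta> g (b i * e (iv g))) = (if g \<in> K0 then e g else 0))))"

end

theory Submission
  imports Defs
begin

text \<open>Multiplying Galois coordinates a_i, b_i of the whole action by the identity 1_y of
S_y gives Galois coordinates of the isotropy group G(y): for g in G(y) the
idempotent 1_y absorbs 1_{g^-1}, because S_{g^-1} is an ideal of S_y, so each defining
sum is the old one multiplied by 1_y.\<close>

lemma partial_galois_restrict:
  fixes u :: "'a::comm_ring_1"
  assumes "partial_galois K K0 iv A \<beta> e"
    and "H \<subseteq> K"
    and "\<And>g. g \<in> H \<Longrightarrow> u * e (iv g) = e (iv g)"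
    and "\<And>g. g \<in> H \<Longrightarrow> g \<in> H0 \<longleftrightarrow> g \<in> K0"
    and "\<And>g. g \<in> H \<Longrightarrow> g \<in> H0 \<Longrightarrow> u * e g = e g"
  shows "partial_galois H H0 iv {a * u | a. True} \<beta> e"
proof -
  obtain m :: nat and a b where "m \<ge> 1"
    and gal: "\<And>g. g \<in> K \<Longrightarrow>
      (\<Sum>i<m. a i * \<beta> g (b i * e (iv g))) = (if g \<in> K0 then e g else 0)"
    using assms(1) unfolding partial_galois_def by blast
  have "(\<Sum>i<m. a i * u * \<beta> g (b i * u * e (iv g))) = (if g \<in> H0 then e g else 0)"
    if g: "g \<in> H" for g
  proof -
    have "(\<Sum>i<m. a i * u * \<beta> g (b i * u * e (iv g)))
          = u * (\<Sum>i<m. a i * \<beta> g (b i * e (iv g)))"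
      using assms(3)[OF g] by (simp add: sum_distrib_left mult.assoc mult.left_commute)
    also have "\<dots> = u * (if g \<in> K0 then e g else 0)"
      using gal g assms(2) by auto
    also have "\<dots> = (if g \<in> H0 then e g else 0)"
      using assms(4,5) g by auto
    finally show ?thesis .
  qed
  moreover have "\<forall>i<m. a i * u \<in> {a * u | a. True} \<and> b i * u \<in> {a * u | a. True}"
    by blast
  ultimately show ?thesis
    unfolding partial_galois_def using \<open>m \<ge> 1\<close>
    by (intro exI[of _ m] conjI exI[of _ "\<lambda>i. a i * u"] exI[of _ "\<lambda>i. b i * u"]) simp_all
qed

lemma groupoid_obj_in_carr:
  "groupoid \<Gamma> \<Longrightarrow> x \<in> obj \<Gamma> \<Longrightarrow> x \<in> carr \<Gamma>"
  unfolding groupoid_def by blast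

lemma isotropy_memD:
  assumes "groupoid \<Gamma>" and "g \<in> isotropy \<Gamma> y"
  shows "g \<in> carr \<Gamma>" and "ginv \<Gamma> g \<in> carr \<Gamma>" and "tgt \<Gamma> (ginv \<Gamma> g) = y"
    and "g \<in> obj \<Gamma> \<longleftrightarrow> g = y"
  using assms unfolding groupoid_def isotropy_def hom_def by auto

lemma unital_pa_unit_mult_tgt:
  assumes "groupoid \<Gamma>" and "partial_action \<Gamma> D \<alpha>" and "unital_pa \<Gamma> D e"
    and "g \<in> carr \<Gamma>"
  shows "e (tgt \<Gamma> g) * e g = e g"
proof -
  have tgt_carr: "tgt \<Gamma> g \<in> carr \<Gamma>"
    using assms(1,4) unfolding groupoid_def by blast
  have "ideal_in (D g) (D (tgt \<Gamma> g))"
    using assms(2,4) unfolding partial_action_def by blast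
  then have "D g \<subseteq> D (tgt \<Gamma> g)"
    unfolding ideal_in_def by blast
  moreover have "e g \<in> D g"
    using assms(3,4) unfolding unital_pa_def by (metis (mono_tags) mem_Collect_eq)
  ultimately have "e g \<in> D (tgt \<Gamma> g)" by blast
  then obtain c where "e g = c * e (tgt \<Gamma> g)"
    using assms(3) tgt_carr unfolding unital_pa_def by blast
  moreover have "e (tgt \<Gamma> g) * e (tgt \<Gamma> g) = e (tgt \<Gamma> g)"
    using assms(3) tgt_carr unfolding unital_pa_def by blast
  ultimately show ?thesis
    by (metis mult.assoc mult.commute)
qed

theorem lemma5p1:
  fixes \<Gamma> :: "'g groupoid"
    and D :: "'g \<Rightarrow> 'a::comm_ring_1 set"
    and \<alpha> :: "'g \<Rightarrow> 'a \<Rightarrow> 'a"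
    and e :: "'g \<Rightarrow> 'a"
  assumes "groupoid \<Gamma>"
    and "finite (carr \<Gamma>)"
    and "connected_groupoid \<Gamma>"
    and "partial_action \<Gamma> D \<alpha>"
    and "unital_pa \<Gamma> D e"
    and "\<forall>g\<in>carr \<Gamma>. e g \<noteq> 0"
    and "group_type \<Gamma> D"
    and "direct_sum_decomp \<Gamma> e"
    and "partial_galois (carr \<Gamma>) (obj \<Gamma>) (ginv \<Gamma>) UNIV \<alpha> e"
  shows "\<forall>y\<in>obj \<Gamma>. partial_galois (isotropy \<Gamma> y) {y} (ginv \<Gamma>) (D y) \<alpha> e"
proof
  fix y assume "y \<in> obj \<Gamma>"
  with assms(1) have y: "y \<in> carr \<Gamma>" by (rule groupoid_obj_in_carr)
  have "partial_galois (isotropy \<Gamma> y) {y} (ginv \<Gamma>) {a * e y | a. True} \<alpha> e"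
  proof (rule partial_galois_restrict[OF assms(9)])
    show "isotropy \<Gamma> y \<subseteq> carr \<Gamma>"
      using isotropy_memD(1)[OF assms(1)] by blast
  next
    fix g assume g: "g \<in> isotropy \<Gamma> y"
    show "e y * e (ginv \<Gamma> g) = e (ginv \<Gamma> g)"
      using unital_pa_unit_mult_tgt[OF assms(1,4,5) isotropy_memD(2)[OF assms(1) g]]
      by (simp add: isotropy_memD(3)[OF assms(1) g])
    show "g \<in> {y} \<longleftrightarrow> g \<in> obj \<Gamma>"
      using isotropy_memD(4)[OF assms(1) g] by simp
    show "e y * e g = e g" if "g \<in> {y}"
      using that y assms(5) unfolding unital_pa_def by simp
  qed
  moreover have "D y = {a * e y | a. True}"
    using y assms(5) unfolding unital_pa_def by blast
  ultimately show "partial_galois (isotropy \<Gamma> y) {y} (ginv \<Gamma>) (D y) \<alpha> e"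
    by simp
qed

end
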